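(* Let $d>0$, $\mu>0$, let $J$ satisfy (J) and let $f$ satisfy (f3). Suppose there is a pair $(c_0,\phi^{c_0})\in(0,\infty)\times C^1((-\infty,0])$, with $\phi^{c_0}\ge0$ nonincreasing in $x$, satisfying $$d\int_{-\infty}^0J(x-y)\phi^{c_0}(y)\,dy-d\phi^{c_0}(x)+c_0(\phi^{c_0})'(x)+f(\phi^{c_0}(x))=0\ (x<0),\quad \phi^{c_0}(-\infty)=1,\ \phi^{c_0}(0)=0,$$ and $$c_0=\mu\int_{-\infty}^0\int_0^{+\infty}J(x-y)\phi^{c_0}(x)\,dy\,dx.$$ Then $\int_{-\infty}^0\int_0^{+\infty}J(x-y)\,dy\,dx<+\infty$.
   Context: Condition (J): $J\in C(\mathbb{R})\cap L^\infty(\mathbb{R})$, $J\ge 0$, $J(0)>0$, $\int_{\mathbb{R}}J=1$, $J$ even. Condition (f3): $f\in C^1([0,\infty))$, $f(0)=f(1)=0$, $f>0$ in $(0,1)$, $f'(0)>0>f'(1)$, $f(u)/u$ nonincreasing in $u>0$. *)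

theory Defs
  imports "HOL-Analysis.Analysis"
begin

definition cond_J :: "(real \<Rightarrow> real) \<Rightarrow> bool" where
  "cond_J J \<longleftrightarrow>
     continuous_on UNIV J \<and> (\<exists>M. \<forall>x. \<bar>J x\<bar> \<le> M) \<and>
     (\<forall>x. J x \<ge> 0) \<and> J 0 > 0 \<and>
     integrable lborel J \<and> (LINT x|lborel. J x) = 1 \<and>
     (\<forall>x. J (- x) = J x)"

definition cond_f3 :: "(real \<Rightarrow> real) \<Rightarrow> bool" where
  "cond_f3 f \<longleftrightarrow>
     (\<exists>f'. (\<forall>u\<ge>0. (f has_real_derivative f' u) (at u within {0..})) \<and>
            continuous_on {0..} f' \<and> f' 0 > 0 \<and> f' 1 < 0) \<and>
     f 0 = 0 \<and> f 1 = 0 \<and> (\<forall>u. 0 < u \<and> u < 1 \<longrightarrow> f u > 0) \<and>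
     (\<forall>u v. 0 < u \<and> u \<le> v \<longrightarrow> f v / v \<le> f u / u)"

end

theory Submission
  imports Defs
begin

text \<open>
  Since \<open>\<integral> J = 1\<close>, the inner integral \<open>\<integral>\<^sub>0\<^sup>\<infinity> J(x - y) dy\<close> is at most 1 for every \<open>x\<close>.
  As \<open>\<phi>(-\<infinity>) = 1\<close>, there is \<open>b \<le> 0\<close> with \<open>\<phi> \<ge> 1/2\<close> on \<open>(-\<infinity>, b]\<close>; so the double integral
  is at most \<open>|b|\<close> (from \<open>[b, 0]\<close>) plus twice the \<open>\<phi>\<close>-weighted double integral, which equals
  \<open>c\<^sub>0 / \<mu>\<close> and is therefore finite.
\<close>

lemma cond_J_nonneg: "cond_J J \<Longrightarrow> J x \<ge> 0"
  unfolding cond_J_def by auto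

lemma cond_J_borel_measurable: "cond_J J \<Longrightarrow> J \<in> borel_measurable borel"
  unfolding cond_J_def by (simp add: borel_measurable_continuous_onI)

lemma nn_integral_cond_J: "cond_J J \<Longrightarrow> (\<integral>\<^sup>+ y. ennreal (J y) \<partial>lborel) = 1"
  unfolding cond_J_def by (subst nn_integral_eq_integral) auto

lemma nn_integral_reflect_shift:
  fixes f :: "real \<Rightarrow> ennreal"
  assumes "f \<in> borel_measurable borel"
  shows "(\<integral>\<^sup>+ y. f (x - y) \<partial>lborel) = (\<integral>\<^sup>+ y. f y \<partial>lborel)"
  using nn_integral_real_affine[OF assms, of "-1" x] by simp

lemma nn_integral_cond_J_halfline_le_1:
  assumes "cond_J J"
  shows "(\<integral>\<^sup>+ y\<in>{0..}. ennreal (J (x - y)) \<partial>lborel) \<le> 1"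
proof -
  have "(\<integral>\<^sup>+ y\<in>{0..}. ennreal (J (x - y)) \<partial>lborel) \<le> (\<integral>\<^sup>+ y. ennreal (J (x - y)) \<partial>lborel)"
    by (intro nn_integral_mono) (simp add: indicator_def)
  also have "\<dots> = (\<integral>\<^sup>+ y. ennreal (J y) \<partial>lborel)"
    using cond_J_borel_measurable[OF assms] by (intro nn_integral_reflect_shift) simp
  also have "\<dots> = 1"
    using assms by (rule nn_integral_cond_J)
  finally show ?thesis .
qed

lemma nn_integral_atMost_less_top_if_weighted:
  fixes g :: "real \<Rightarrow> ennreal" and w :: "real \<Rightarrow> real"
  assumes [measurable]: "g \<in> borel_measurable borel"
    and bound: "\<And>x. g x \<le> ennreal C"
    and "a > 0" and weight: "\<And>x. x \<le> b \<Longrightarrow> w x \<ge> a"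
    and weighted: "(\<integral>\<^sup>+ x\<in>{..c}. ennreal (w x) * g x \<partial>lborel) < \<infinity>"
  shows "(\<integral>\<^sup>+ x\<in>{..c}. g x \<partial>lborel) < \<infinity>"
proof -
  define b' where "b' = min b c"
  have "ennreal a * (\<integral>\<^sup>+ x\<in>{..b'}. g x \<partial>lborel) = (\<integral>\<^sup>+ x\<in>{..b'}. ennreal a * g x \<partial>lborel)"
    by (simp add: nn_integral_cmult mult.assoc)
  also have "\<dots> \<le> (\<integral>\<^sup>+ x\<in>{..c}. ennreal (w x) * g x \<partial>lborel)"
    using weight by (intro nn_integral_mono)
      (auto simp: b'_def indicator_def intro!: mult_right_mono ennreal_leI)
  also note weighted
  finally have "(\<integral>\<^sup>+ x\<in>{..b'}. g x \<partial>lborel) < \<infinity>"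
    using \<open>a > 0\<close> by (auto simp: ennreal_mult_less_top)
  have "(\<integral>\<^sup>+ x\<in>{..c}. g x \<partial>lborel)
      \<le> (\<integral>\<^sup>+ x. g x * indicator {..b'} x + ennreal C * indicator {b'..c} x \<partial>lborel)"
    using bound by (intro nn_integral_mono) (auto simp: b'_def indicator_def)
  also have "\<dots> = (\<integral>\<^sup>+ x\<in>{..b'}. g x \<partial>lborel) + ennreal C * ennreal (c - b')"
    by (simp add: nn_integral_add nn_integral_cmult_indicator b'_def)
  also have "\<dots> < \<infinity>"
    using \<open>(\<integral>\<^sup>+ x\<in>{..b'}. g x \<partial>lborel) < \<infinity>\<close> by (simp add: ennreal_mult_less_top)
  finally show ?thesis .
qed

theorem lemma2p10:
  fixes d \<mu> c0 :: real and J f \<phi> \<phi>' :: "real \<Rightarrow> real"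
  assumes "d > 0" and "\<mu> > 0" and "cond_J J" and "cond_f3 f"
    and "c0 > 0"
    and "\<forall>x\<le>0. (\<phi> has_real_derivative \<phi>' x) (at x within {..0})"
    and "continuous_on {..0} \<phi>'"
    and "\<forall>x\<le>0. \<phi> x \<ge> 0"
    and "\<forall>x y. x \<le> y \<and> y \<le> 0 \<longrightarrow> \<phi> y \<le> \<phi> x"
    and "\<forall>x<0. d * (LINT y:{..0}|lborel. J (x - y) * \<phi> y) - d * \<phi> x
                 + c0 * \<phi>' x + f (\<phi> x) = 0"
    and "(\<phi> \<longlongrightarrow> 1) at_bot" and "\<phi> 0 = 0"
    and "ennreal c0 = ennreal \<mu> *
           (\<integral>\<^sup>+ x\<in>{..0}. (\<integral>\<^sup>+ y\<in>{0..}. ennreal (J (x - y) * \<phi> x) \<partial>lborel) \<partial>lborel)"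
  shows "(\<integral>\<^sup>+ x\<in>{..0}. (\<integral>\<^sup>+ y\<in>{0..}. ennreal (J (x - y)) \<partial>lborel) \<partial>lborel) < \<infinity>"
proof -
  note J_nonneg = cond_J_nonneg[OF \<open>cond_J J\<close>]
  note [measurable] = cond_J_borel_measurable[OF \<open>cond_J J\<close>]
  define g where "g x = (\<integral>\<^sup>+ y\<in>{0..}. ennreal (J (x - y)) \<partial>lborel)" for x
  have weighted_eq: "(\<integral>\<^sup>+ x\<in>{..0}. ennreal (\<phi> x) * g x \<partial>lborel)
      = (\<integral>\<^sup>+ x\<in>{..0}. (\<integral>\<^sup>+ y\<in>{0..}. ennreal (J (x - y) * \<phi> x) \<partial>lborel) \<partial>lborel)"
    using \<open>\<forall>x\<le>0. \<phi> x \<ge> 0\<close> J_nonneg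
    by (intro nn_integral_cong)
      (auto simp: g_def indicator_def ennreal_mult' mult_ac simp flip: nn_integral_cmult)
  have "ennreal \<mu> \<noteq> 0" and "ennreal c0 < \<infinity>"
    using \<open>\<mu> > 0\<close> by auto
  then have weighted_finite: "(\<integral>\<^sup>+ x\<in>{..0}. ennreal (\<phi> x) * g x \<partial>lborel) < \<infinity>"
    unfolding weighted_eq \<open>ennreal c0 = _\<close> by (auto simp: ennreal_mult_less_top)
  have "\<forall>\<^sub>F x in at_bot. \<phi> x > 1 / 2"
    using \<open>(\<phi> \<longlongrightarrow> 1) at_bot\<close> by (rule order_tendstoD) simp
  then obtain b where "\<And>x. x \<le> b \<Longrightarrow> \<phi> x \<ge> 1 / 2"
    by (metis eventually_at_bot_linorder less_imp_le)
  moreover have "g x \<le> ennreal 1" for x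
    unfolding g_def using nn_integral_cond_J_halfline_le_1[OF \<open>cond_J J\<close>] by simp
  moreover have "g \<in> borel_measurable borel"
    unfolding g_def by measurable
  ultimately show ?thesis
    using nn_integral_atMost_less_top_if_weighted[of g 1 "1 / 2" b \<phi> 0] weighted_finite
    unfolding g_def by simp
qed

end
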